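(* Let $G$ be an abelian group, $t$ a positive integer, and $U,V\subset G$ finite sets with $t\leq |V|\leq |U|$. Then \[\sum _{x\in G} \min(1_U*1_V(x), t)\ge t\big(|U|+|V|-t-\alpha(U,V)\big).\]
   Context: For $x\in G$, $1_U*1_V(x)$ is the number of pairs $(u,v)\in U\times V$ with $u+v=x$. For finite $U,V\subset G$, $\alpha(U,V)=\max\{|V'|: V'\subset G,\ |V'|\leq |V|,\ |\langle V'\rangle|\leq |U|+|V|-|V'|\}$, where $\langle V'\rangle$ is the subgroup generated by $V'$. *)

theory Defs
  imports Main
begin

definition gen_subgroup :: "'a::ab_group_add set \<Rightarrow> 'a set" where
  "gen_subgroup S = \<Inter>{H. S \<subseteq> H \<and> 0 \<in> H \<and> (\<forall>x\<in>H. \<forall>y\<in>H. x + y \<in> H) \<and> (\<forall>x\<in>H. - x \<in> H)}"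

definition conv_count :: "'a::ab_group_add set \<Rightarrow> 'a set \<Rightarrow> 'a \<Rightarrow> nat" where
  "conv_count U V x = card {(u, v). u \<in> U \<and> v \<in> V \<and> u + v = x}"

(* alpha(U,V); the subgroup size condition is read with the subgroup finite *)
definition alpha :: "'a::ab_group_add set \<Rightarrow> 'a set \<Rightarrow> nat" where
  "alpha U V = Max {card V' | V' :: 'a set. finite V' \<and> card V' \<le> card V \<and>
      finite (gen_subgroup V') \<and> card (gen_subgroup V') + card V' \<le> card U + card V}"

end

theory Submission
  imports Defs
begin

text \<open>
  Induction on \<open>|V|\<close> via Dyson e-transforms. If some \<open>e = u - v\<close> with \<open>u \<in> U\<close>, \<open>v \<in> V\<close>
  has \<open>V + e\<close> not contained in \<open>U\<close>, pass to \<open>U(e) = U \<union> (V + e)\<close>, \<open>V(e) = V \<inter> (U - e)\<close>: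
  this keeps \<open>|U| + |V|\<close>, strictly shrinks \<open>V\<close> and never increases a representation count.
  If \<open>t \<le> |V(e)|\<close>, induction applies to the new pair. Otherwise the representations of \<open>x\<close>
  by \<open>U(e) \<times> V(e)\<close> and by the rest pair \<open>(U - (V(e) + e), V - V(e))\<close> inject disjointly into
  those by \<open>U \<times> V\<close>, and the former number at most \<open>|V(e)|\<close>; so the sum is at least
  \<open>|U(e)| |V(e)|\<close> plus the sum for the rest pair at level \<open>t - |V(e)|\<close>, to which induction applies.
  If no e-transform changes the pair, then \<open>U + (V - V) \<subseteq> U\<close>: every \<open>x\<close> in the sumset has
  exactly \<open>|V|\<close> representations, so the sum is \<open>t |U|\<close>, while \<open>V - v\<^sub>0\<close> generates a subgroup
  of the stabilizer of \<open>U\<close>, which has at most \<open>|U|\<close> elements, whence \<open>\<alpha>(U, V) \<ge> |V|\<close>.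
\<close>

abbreviation sumset :: "'a::ab_group_add set \<Rightarrow> 'a set \<Rightarrow> 'a set" where
  "sumset U V \<equiv> {u + v | u v. u \<in> U \<and> v \<in> V}"

lemma sumset_eq_image: "sumset U V = (\<lambda>(u, v). u + v) ` (U \<times> V)"
  by auto

lemma finite_sumset: "finite U \<Longrightarrow> finite V \<Longrightarrow> finite (sumset U V)"
  unfolding sumset_eq_image by simp

lemma sumset_mono: "U' \<subseteq> U \<Longrightarrow> V' \<subseteq> V \<Longrightarrow> sumset U' V' \<subseteq> sumset U V"
  by blast

lemma conv_count_le_card:
  assumes "finite V"
  shows "conv_count U V x \<le> card V"
  unfolding conv_count_def
  by (rule card_inj_on_le[where f = snd]) (use assms in \<open>auto simp: inj_on_def\<close>)

lemma sum_conv_count: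
  assumes "finite U" "finite V" "finite S" "sumset U V \<subseteq> S"
  shows "(\<Sum>x\<in>S. conv_count U V x) = card U * card V"
proof -
  have "(\<Sum>x\<in>S. conv_count U V x) = (\<Sum>x\<in>S. card {p \<in> U \<times> V. fst p + snd p = x})"
    unfolding conv_count_def by (intro sum.cong arg_cong[where f = card]) auto
  also have "\<dots> = card (\<Union>x\<in>S. {p \<in> U \<times> V. fst p + snd p = x})"
    by (rule card_UN_disjoint[symmetric]) (use assms in auto)
  also have "(\<Union>x\<in>S. {p \<in> U \<times> V. fst p + snd p = x}) = U \<times> V"
    using assms(4) by fastforce
  finally show ?thesis
    by (simp add: card_cartesian_product)
qed

definition trunc_conv_sum :: "'a::ab_group_add set \<Rightarrow> 'a set \<Rightarrow> nat \<Rightarrow> nat" where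
  "trunc_conv_sum U V t = (\<Sum>x\<in>sumset U V. min (conv_count U V x) t)"

definition dyson_U :: "'a::ab_group_add \<Rightarrow> 'a set \<Rightarrow> 'a set \<Rightarrow> 'a set" where
  "dyson_U e U V = U \<union> (\<lambda>v. v + e) ` V"

definition dyson_V :: "'a::ab_group_add \<Rightarrow> 'a set \<Rightarrow> 'a set \<Rightarrow> 'a set" where
  "dyson_V e U V = V \<inter> {v. v + e \<in> U}"

abbreviation dyson_rest_U :: "'a::ab_group_add \<Rightarrow> 'a set \<Rightarrow> 'a set \<Rightarrow> 'a set" where
  "dyson_rest_U e U V \<equiv> U - (\<lambda>v. v + e) ` dyson_V e U V"

abbreviation dyson_rest_V :: "'a::ab_group_add \<Rightarrow> 'a set \<Rightarrow> 'a set \<Rightarrow> 'a set" where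
  "dyson_rest_V e U V \<equiv> V - dyson_V e U V"

lemma finite_dyson_U: "finite U \<Longrightarrow> finite V \<Longrightarrow> finite (dyson_U e U V)"
  by (simp add: dyson_U_def)

lemma finite_dyson_V: "finite V \<Longrightarrow> finite (dyson_V e U V)"
  by (simp add: dyson_V_def)

lemma dyson_V_subset: "dyson_V e U V \<subseteq> V"
  by (auto simp: dyson_V_def)

lemma translate_dyson_V_subset: "(\<lambda>v. v + e) ` dyson_V e U V \<subseteq> U"
  by (auto simp: dyson_V_def)

lemma card_dyson:
  assumes "finite U" "finite V"
  shows "card (dyson_U e U V) + card (dyson_V e U V) = card U + card V"
proof -
  define B where "B = V - dyson_V e U V"
  have "dyson_U e U V = U \<union> (\<lambda>v. v + e) ` B" "U \<inter> (\<lambda>v. v + e) ` B = {}"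
    by (auto simp: dyson_U_def dyson_V_def B_def)
  then have "card (dyson_U e U V) = card U + card B"
    using assms by (simp add: B_def card_Un_disjoint card_image inj_on_def)
  moreover have "card V = card B + card (dyson_V e U V)"
    using assms dyson_V_subset[of e U V] unfolding B_def
    by (metis card_Diff_subset finite_subset card_mono le_add_diff_inverse2)
  ultimately show ?thesis
    by simp
qed

lemma card_dyson_rest:
  assumes "finite U" "finite V"
  shows "card (dyson_rest_U e U V) = card U - card (dyson_V e U V)"
    and "card (dyson_rest_V e U V) = card V - card (dyson_V e U V)"
proof -
  have "card ((\<lambda>v. v + e) ` dyson_V e U V) = card (dyson_V e U V)"
    by (rule card_image) (auto simp: inj_on_def)
  then show "card (dyson_rest_U e U V) = card U - card (dyson_V e U V)"
    using card_Diff_subset[OF finite_subset[OF translate_dyson_V_subset assms(1)] translate_dyson_V_subset]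
    by simp
  show "card (dyson_rest_V e U V) = card V - card (dyson_V e U V)"
    using card_Diff_subset[OF finite_subset[OF dyson_V_subset assms(2)] dyson_V_subset] .
qed

lemma sumset_dyson_subset: "sumset (dyson_U e U V) (dyson_V e U V) \<subseteq> sumset U V"
proof
  fix x assume "x \<in> sumset (dyson_U e U V) (dyson_V e U V)"
  then obtain u v where x: "x = u + v" "u \<in> dyson_U e U V" "v \<in> dyson_V e U V"
    by blast
  show "x \<in> sumset U V"
  proof (cases "u \<in> U")
    case True
    then show ?thesis using x dyson_V_subset by blast
  next
    case False
    then obtain w where "w \<in> V" "u = w + e"
      using x by (auto simp: dyson_U_def)
    moreover have "v + e \<in> U"
      using x by (simp add: dyson_V_def)
    moreover have "x = (v + e) + w"
      using x \<open>u = w + e\<close> by (simp add: algebra_simps)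
    ultimately show ?thesis
      by blast
  qed
qed

lemma conv_count_dyson_add_rest_le:
  assumes "finite U" "finite V"
  shows "conv_count (dyson_U e U V) (dyson_V e U V) x
       + conv_count (dyson_rest_U e U V) (dyson_rest_V e U V) x
       \<le> conv_count U V x"
proof -
  let ?V' = "dyson_V e U V"
  let ?P = "{(u, v). u \<in> U \<and> v \<in> V \<and> u + v = x}"
  let ?P1 = "{(u, v). u \<in> dyson_U e U V \<and> v \<in> ?V' \<and> u + v = x}"
  let ?P2 = "{(u, v). u \<in> U - (\<lambda>v. v + e) ` ?V' \<and> v \<in> V - ?V' \<and> u + v = x}"
  \<comment> \<open>a pair (w + e, v) with w + e \<notin> U is swapped into (v + e, w) \<in> U \<times> V\<close>
  define f where "f = (\<lambda>(u, v). if u \<in> U then (u, v) else (v + e, u - e))"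
  have inj: "inj_on f ?P1"
    by (auto simp: inj_on_def f_def dyson_V_def split: if_splits)
  have "f p \<in> ?P" if "p \<in> ?P1" for p
  proof -
    obtain u v where p: "p = (u, v)" "u \<in> dyson_U e U V" "v \<in> ?V'" "u + v = x"
      using \<open>p \<in> ?P1\<close> by auto
    show ?thesis
    proof (cases "u \<in> U")
      case True
      then show ?thesis using p dyson_V_subset by (auto simp: f_def)
    next
      case False
      then have "u - e \<in> V" using p by (auto simp: dyson_U_def)
      moreover have "v + e \<in> U" using p by (simp add: dyson_V_def)
      moreover have "(v + e) + (u - e) = x" using p by (simp add: algebra_simps)
      ultimately show ?thesis using p False by (simp add: f_def)
    qed
  qed
  then have sub1: "f ` ?P1 \<subseteq> ?P"
    by (rule image_subsetI)
  have "f p \<in> - ?P2" if "p \<in> ?P1" for p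
  proof -
    obtain u v where p: "p = (u, v)" "v \<in> ?V'"
      using \<open>p \<in> ?P1\<close> by auto
    then have "v + e \<in> (\<lambda>v. v + e) ` ?V'"
      by blast
    with p show ?thesis
      by (cases "u \<in> U") (simp_all add: f_def)
  qed
  then have disj: "f ` ?P1 \<inter> ?P2 = {}"
    by (simp only: disjoint_eq_subset_Compl image_subsetI)
  have sub2: "?P2 \<subseteq> ?P"
    by auto
  have fin: "finite ?P"
    using assms by (auto intro: finite_subset[of _ "U \<times> V"])
  have "card ?P1 + card ?P2 = card (f ` ?P1 \<union> ?P2)"
    using card_Un_disjoint[OF finite_subset[OF sub1 fin] finite_subset[OF sub2 fin] disj]
    by (simp add: card_image[OF inj])
  also have "\<dots> \<le> card ?P"
    using sub1 sub2 fin by (intro card_mono) auto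
  finally have "card ?P1 + card ?P2 \<le> card ?P" .
  then show ?thesis
    unfolding conv_count_def .
qed

lemma conv_count_dyson_le:
  "finite U \<Longrightarrow> finite V \<Longrightarrow> conv_count (dyson_U e U V) (dyson_V e U V) x \<le> conv_count U V x"
  using conv_count_dyson_add_rest_le[of U V e x] by linarith

lemma gen_subgroup_least:
  assumes "W \<subseteq> H" "0 \<in> H" "\<And>x y. x \<in> H \<Longrightarrow> y \<in> H \<Longrightarrow> x + y \<in> H"
    "\<And>x. x \<in> H \<Longrightarrow> - x \<in> H"
  shows "gen_subgroup W \<subseteq> H"
  unfolding gen_subgroup_def using assms by (intro Inter_lower) auto

definition stabilizer :: "'a::ab_group_add set \<Rightarrow> 'a set" where
  "stabilizer U = {h. (\<lambda>u. u + h) ` U = U}"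

lemma zero_in_stabilizer: "0 \<in> stabilizer U"
  by (simp add: stabilizer_def)

lemma add_in_stabilizer:
  assumes "x \<in> stabilizer U" "y \<in> stabilizer U"
  shows "x + y \<in> stabilizer U"
proof -
  have "(\<lambda>u. u + (x + y)) ` U = (\<lambda>u. u + y) ` ((\<lambda>u. u + x) ` U)"
    by (simp add: image_image add.assoc)
  then show ?thesis
    using assms by (simp add: stabilizer_def)
qed

lemma uminus_in_stabilizer:
  assumes "x \<in> stabilizer U"
  shows "- x \<in> stabilizer U"
proof -
  have "(\<lambda>u. u + - x) ` ((\<lambda>u. u + x) ` U) = U"
    by (simp add: image_image)
  then show ?thesis
    using assms by (simp add: stabilizer_def)
qed

lemma in_stabilizer_if_translate_subset:
  assumes "finite U" "(\<lambda>u. u + h) ` U \<subseteq> U"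
  shows "h \<in> stabilizer U"
proof -
  have "card ((\<lambda>u. u + h) ` U) = card U"
    by (rule card_image) (auto simp: inj_on_def)
  then show ?thesis
    using card_subset_eq[OF assms(1,2)] by (simp add: stabilizer_def)
qed

lemma stabilizer_subset_translate:
  assumes "u0 \<in> U"
  shows "stabilizer U \<subseteq> (\<lambda>u. u - u0) ` U"
proof
  fix h assume "h \<in> stabilizer U"
  then have "u0 + h \<in> (\<lambda>u. u + h) ` U"
    using assms by blast
  with \<open>h \<in> stabilizer U\<close> have "u0 + h \<in> U"
    by (simp add: stabilizer_def)
  then show "h \<in> (\<lambda>u. u - u0) ` U"
    by (rule rev_image_eqI) simp
qed

lemma
  assumes "finite U" "U \<noteq> {}"
  shows finite_stabilizer: "finite (stabilizer U)"
    and card_stabilizer_le: "card (stabilizer U) \<le> card U"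
proof -
  obtain u0 where "u0 \<in> U"
    using assms(2) by blast
  then have "stabilizer U \<subseteq> (\<lambda>u. u - u0) ` U"
    by (rule stabilizer_subset_translate)
  then show "finite (stabilizer U)" "card (stabilizer U) \<le> card U"
    using assms(1) by (auto intro: finite_subset card_mono[THEN order.trans] card_image_le)
qed

lemma gen_subgroup_subset_stabilizer:
  assumes "finite U" "\<And>u w. u \<in> U \<Longrightarrow> w \<in> W \<Longrightarrow> u + w \<in> U"
  shows "gen_subgroup W \<subseteq> stabilizer U"
proof (rule gen_subgroup_least)
  show "W \<subseteq> stabilizer U"
    using assms by (auto intro: in_stabilizer_if_translate_subset)
qed (auto intro: zero_in_stabilizer add_in_stabilizer uminus_in_stabilizer)

definition alpha_admissible :: "'a::ab_group_add set \<Rightarrow> 'a set \<Rightarrow> 'a set \<Rightarrow> bool" where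
  "alpha_admissible U V W \<longleftrightarrow> finite W \<and> card W \<le> card V \<and>
      finite (gen_subgroup W) \<and> card (gen_subgroup W) + card W \<le> card U + card V"

lemma card_le_alpha:
  fixes W :: "'a::ab_group_add set"
  assumes "alpha_admissible U V W"
  shows "card W \<le> alpha U V"
proof -
  let ?S = "{card V' | V' :: 'a set. finite V' \<and> card V' \<le> card V \<and>
      finite (gen_subgroup V') \<and> card (gen_subgroup V') + card V' \<le> card U + card V}"
  have "finite ?S"
    by (rule finite_subset[of _ "{..card V}"]) auto
  moreover have "card W \<in> ?S"
    using assms unfolding alpha_admissible_def by blast
  ultimately show ?thesis
    unfolding alpha_def by (rule Max_ge)
qed

lemma alpha_admissible_mono:
  "alpha_admissible U' V' W \<Longrightarrow> card V' \<le> card V \<Longrightarrow> card U' + card V' \<le> card U + card V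
    \<Longrightarrow> alpha_admissible U V W"
  unfolding alpha_admissible_def by linarith

definition dyson_saturated :: "'a::ab_group_add set \<Rightarrow> 'a set \<Rightarrow> bool" where
  "dyson_saturated U V \<longleftrightarrow> (\<forall>u\<in>U. \<forall>v\<in>V. \<forall>w\<in>V. u + (w - v) \<in> U)"

lemma sumset_eq_translate_if_saturated:
  assumes "dyson_saturated U V" "v0 \<in> V"
  shows "sumset U V = (\<lambda>u. u + v0) ` U"
proof (intro equalityI subsetI)
  fix x assume "x \<in> sumset U V"
  then obtain u v where "u \<in> U" "v \<in> V" "x = u + v"
    by blast
  then have "u + (v - v0) \<in> U" "x = (u + (v - v0)) + v0"
    using assms by (auto simp: dyson_saturated_def)
  then show "x \<in> (\<lambda>u. u + v0) ` U"
    by blast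
qed (use assms(2) in blast)

lemma conv_count_eq_card_if_saturated:
  assumes "dyson_saturated U V" "finite V" "x \<in> sumset U V"
  shows "conv_count U V x = card V"
proof -
  obtain u0 v0 where x: "x = u0 + v0" "u0 \<in> U" "v0 \<in> V"
    using assms(3) by blast
  have "x - v \<in> U" if "v \<in> V" for v
  proof -
    have "u0 + (v0 - v) \<in> U"
      using assms(1) x(2,3) that by (simp add: dyson_saturated_def)
    then show ?thesis
      using x(1) by (simp add: algebra_simps)
  qed
  then have "{(u, v). u \<in> U \<and> v \<in> V \<and> u + v = x} = (\<lambda>v. (x - v, v)) ` V"
    by (auto simp: algebra_simps)
  also have "card \<dots> = card V"
    by (rule card_image) (auto simp: inj_on_def)
  finally show ?thesis
    unfolding conv_count_def .
qed

lemma trunc_conv_sum_if_saturated: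
  assumes "dyson_saturated U V" "finite V" "v0 \<in> V" "t \<le> card V"
  shows "trunc_conv_sum U V t = t * card U"
proof -
  have "trunc_conv_sum U V t = (\<Sum>x\<in>sumset U V. t)"
    unfolding trunc_conv_sum_def
    using assms conv_count_eq_card_if_saturated[OF assms(1,2)] by (intro sum.cong) auto
  also have "\<dots> = t * card ((\<lambda>u. u + v0) ` U)"
    using sumset_eq_translate_if_saturated[OF assms(1,3)] by simp
  also have "card ((\<lambda>u. u + v0) ` U) = card U"
    by (rule card_image) (auto simp: inj_on_def)
  finally show ?thesis .
qed

lemma alpha_admissible_of_card_if_saturated:
  assumes "dyson_saturated U V" "finite U" "finite V" "v0 \<in> V" "card V \<le> card U"
  shows "\<exists>W. alpha_admissible U V W \<and> card W = card V"
proof -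
  let ?W = "(\<lambda>v. v - v0) ` V"
  have "U \<noteq> {}"
    using assms(3-5) by auto
  have "gen_subgroup ?W \<subseteq> stabilizer U"
    using assms(1,2,4) by (intro gen_subgroup_subset_stabilizer) (auto simp: dyson_saturated_def)
  then have "finite (gen_subgroup ?W)" "card (gen_subgroup ?W) \<le> card U"
    using finite_stabilizer[OF assms(2) \<open>U \<noteq> {}\<close>] card_stabilizer_le[OF assms(2) \<open>U \<noteq> {}\<close>]
    by (auto intro: finite_subset card_mono[THEN order.trans])
  moreover have "card ?W = card V"
    by (rule card_image) (auto simp: inj_on_def)
  ultimately have "alpha_admissible U V ?W"
    using assms(3) by (simp add: alpha_admissible_def)
  with \<open>card ?W = card V\<close> show ?thesis
    by blast
qed

lemma trunc_conv_sum_lower_bound_if_saturated: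
  assumes "dyson_saturated U V" "finite U" "finite V" "card V \<le> card U" "t \<le> card V"
    and alpha_bound: "\<And>W. alpha_admissible U V W \<Longrightarrow> card W \<le> a"
  shows "t * (card U + card V) \<le> trunc_conv_sum U V t + t * (t + a)"
proof (cases "V = {}")
  case True
  then show ?thesis
    using assms(5) by simp
next
  case False
  then obtain v0 where "v0 \<in> V"
    by blast
  then have "card V \<le> a"
    using alpha_admissible_of_card_if_saturated[OF assms(1-3) _ assms(4)] alpha_bound by metis
  then have "t * card V \<le> t * (t + a)"
    by simp
  moreover have "trunc_conv_sum U V t = t * card U"
    using assms(1,3,5) \<open>v0 \<in> V\<close> by (intro trunc_conv_sum_if_saturated)
  ultimately show ?thesis
    by (simp add: add_mult_distrib2)
qed

lemma trunc_conv_sum_dyson_le: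
  assumes "finite U" "finite V"
  shows "trunc_conv_sum (dyson_U e U V) (dyson_V e U V) t \<le> trunc_conv_sum U V t"
proof -
  have "trunc_conv_sum (dyson_U e U V) (dyson_V e U V) t
      \<le> (\<Sum>x\<in>sumset (dyson_U e U V) (dyson_V e U V). min (conv_count U V x) t)"
    unfolding trunc_conv_sum_def
    using conv_count_dyson_le[OF assms] by (intro sum_mono min.mono) auto
  also have "\<dots> \<le> trunc_conv_sum U V t"
    unfolding trunc_conv_sum_def
    by (rule sum_mono2[OF finite_sumset[OF assms] sumset_dyson_subset]) simp
  finally show ?thesis .
qed

lemma trunc_conv_sum_dyson_split:
  assumes "finite U" "finite V" "card (dyson_V e U V) \<le> t"
  shows "card (dyson_U e U V) * card (dyson_V e U V)
       + trunc_conv_sum (dyson_rest_U e U V) (dyson_rest_V e U V) (t - card (dyson_V e U V))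
       \<le> trunc_conv_sum U V t"
proof -
  let ?U' = "dyson_U e U V" and ?V' = "dyson_V e U V"
  let ?U'' = "dyson_rest_U e U V" and ?V'' = "dyson_rest_V e U V"
  let ?s = "card ?V'"
  have fin: "finite (sumset U V)"
    using assms(1,2) by (rule finite_sumset)
  have "conv_count ?U' ?V' x + min (conv_count ?U'' ?V'' x) (t - ?s) \<le> min (conv_count U V x) t" for x
    using conv_count_dyson_add_rest_le[OF assms(1,2), of e x]
      conv_count_le_card[of ?V' ?U' x] finite_dyson_V[OF assms(2)] assms(3)
    by (auto simp: min_def)
  then have "(\<Sum>x\<in>sumset U V. conv_count ?U' ?V' x) + (\<Sum>x\<in>sumset U V. min (conv_count ?U'' ?V'' x) (t - ?s))
      \<le> trunc_conv_sum U V t"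
    unfolding trunc_conv_sum_def sum.distrib[symmetric] by (rule sum_mono)
  moreover have "(\<Sum>x\<in>sumset U V. conv_count ?U' ?V' x) = card ?U' * ?s"
    using assms(1,2) fin sumset_dyson_subset
    by (intro sum_conv_count finite_dyson_U finite_dyson_V)
  moreover have "trunc_conv_sum ?U'' ?V'' (t - ?s) \<le> (\<Sum>x\<in>sumset U V. min (conv_count ?U'' ?V'' x) (t - ?s))"
    unfolding trunc_conv_sum_def using fin by (intro sum_mono2 sumset_mono) auto
  ultimately show ?thesis
    by linarith
qed

lemma trunc_conv_sum_lower_bound_of_dyson:
  assumes "finite U" "finite V"
    and "t * (card (dyson_U e U V) + card (dyson_V e U V))
      \<le> trunc_conv_sum (dyson_U e U V) (dyson_V e U V) t + t * (t + a)"
  shows "t * (card U + card V) \<le> trunc_conv_sum U V t + t * (t + a)"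
  using assms(3) card_dyson[OF assms(1,2)] trunc_conv_sum_dyson_le[OF assms(1,2), of e t] by simp

lemma trunc_conv_sum_lower_bound_of_dyson_rest:
  assumes "finite U" "finite V" "card V \<le> card U" "card (dyson_V e U V) \<le> t"
    and "(t - card (dyson_V e U V)) * (card (dyson_rest_U e U V) + card (dyson_rest_V e U V))
      \<le> trunc_conv_sum (dyson_rest_U e U V) (dyson_rest_V e U V) (t - card (dyson_V e U V))
        + (t - card (dyson_V e U V)) * (t - card (dyson_V e U V) + a)"
  shows "t * (card U + card V) \<le> trunc_conv_sum U V t + t * (t + a)"
proof -
  define s where "s = card (dyson_V e U V)"
  have "s \<le> card V"
    unfolding s_def using assms(2) by (intro card_mono dyson_V_subset)
  define r where "r = t - s"
  define M where "M = card U + card V - 2 * s"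
  have r: "t = s + r" and M: "card U + card V = 2 * s + M"
    using assms(3,4) \<open>s \<le> card V\<close> by (simp_all add: r_def M_def s_def)
  have "card (dyson_rest_U e U V) + card (dyson_rest_V e U V) = M"
    using card_dyson_rest[OF assms(1,2), of e] M \<open>s \<le> card V\<close> assms(3)
    by (simp add: s_def)
  then have IH: "r * M \<le> trunc_conv_sum (dyson_rest_U e U V) (dyson_rest_V e U V) r + r * (r + a)"
    using assms(5) by (simp add: r_def s_def)
  have split: "(s + M) * s + trunc_conv_sum (dyson_rest_U e U V) (dyson_rest_V e U V) r
      \<le> trunc_conv_sum U V t"
    using trunc_conv_sum_dyson_split[OF assms(1,2), of e t] card_dyson[OF assms(1,2), of e] assms(4) M
    by (simp add: s_def r_def)
  have "(s + M) * s + r * M + (s + r) * (s + r + a) = (s + r) * (2 * s + M) + r * (r + a) + s * a"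
    by (simp add: algebra_simps)
  then have "(s + r) * (2 * s + M) \<le> trunc_conv_sum U V t + (s + r) * (s + r + a)"
    using IH split by linarith
  then show ?thesis
    using M r by simp
qed

lemma trunc_conv_sum_lower_bound:
  assumes "finite U" "finite V" "card V \<le> card U" "t \<le> card V"
    and "\<And>W. alpha_admissible U V W \<Longrightarrow> card W \<le> a"
  shows "t * (card U + card V) \<le> trunc_conv_sum U V t + t * (t + a)"
  using assms
proof (induction "card V" arbitrary: U V t rule: less_induct)
  case less
  note fin = less.prems(1,2) and alpha_bound = less.prems(5)
  show ?case
  proof (cases "dyson_saturated U V")
    case True
    then show ?thesis
      using less.prems by (rule trunc_conv_sum_lower_bound_if_saturated)
  next
    case False
    then obtain u v w where "u \<in> U" "v \<in> V" "w \<in> V" "u + (w - v) \<notin> U"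
      by (auto simp: dyson_saturated_def)
    define e where "e = u - v"
    let ?U' = "dyson_U e U V" and ?V' = "dyson_V e U V"
    have "v \<in> ?V'" "w \<in> V - ?V'"
      using \<open>u \<in> U\<close> \<open>v \<in> V\<close> \<open>w \<in> V\<close> \<open>u + (w - v) \<notin> U\<close>
      by (auto simp: dyson_V_def e_def algebra_simps)
    then have "0 < card ?V'" "card ?V' < card V"
      using fin dyson_V_subset[of e U V]
      by (auto simp: card_gt_0_iff intro!: psubset_card_mono finite_dyson_V)
    have card_sum: "card ?U' + card ?V' = card U + card V"
      using fin by (rule card_dyson)
    show ?thesis
    proof (cases "t \<le> card ?V'")
      case True
      show ?thesis
      proof (rule trunc_conv_sum_lower_bound_of_dyson[OF fin, where e = e], rule less.hyps)
        show "card ?V' < card V" "t \<le> card ?V'" "finite ?U'" "finite ?V'" "card ?V' \<le> card ?U'"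
          using fin card_sum \<open>card ?V' < card V\<close> less.prems(3) True
          by (simp_all add: finite_dyson_U finite_dyson_V)
        show "card W \<le> a" if "alpha_admissible ?U' ?V' W" for W
          using card_sum \<open>card ?V' < card V\<close>
          by (intro alpha_bound alpha_admissible_mono[OF that]) simp_all
      qed
    next
      case False
      let ?U'' = "dyson_rest_U e U V" and ?V'' = "dyson_rest_V e U V"
      have V'_le: "card ?V' \<le> t"
        using False by simp
      show ?thesis
      proof (rule trunc_conv_sum_lower_bound_of_dyson_rest[OF fin less.prems(3) V'_le], rule less.hyps)
        show "card ?V'' < card V" "t - card ?V' \<le> card ?V''"
          "card ?V'' \<le> card ?U''" "finite ?U''" "finite ?V''"
          using card_dyson_rest[OF fin, of e] \<open>0 < card ?V'\<close> \<open>card ?V' < card V\<close>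
            less.prems(3,4) False fin
          by simp_all
        show "card W \<le> a" if "alpha_admissible ?U'' ?V'' W" for W
          using card_dyson_rest[OF fin, of e] \<open>card ?V' < card V\<close> less.prems(3)
          by (intro alpha_bound alpha_admissible_mono[OF that]) simp_all
      qed
    qed
  qed
qed

theorem theorem3p2:
  fixes U V :: "'a::ab_group_add set" and t :: nat
  assumes "finite U" and "finite V" and "0 < t" and "t \<le> card V" and "card V \<le> card U"
  shows "(\<Sum>x\<in>{u + v | u v. u \<in> U \<and> v \<in> V}. int (min (conv_count U V x) t))
           \<ge> int t * (int (card U) + int (card V) - int t - int (alpha U V))"
  \<comment> \<open>the bound also holds for \<open>t = 0\<close>\<close>
proof -
  have "t * (card U + card V) \<le> trunc_conv_sum U V t + t * (t + alpha U V)"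
    by (rule trunc_conv_sum_lower_bound[OF assms(1,2,5,4) card_le_alpha])
  then have "int t * (int (card U) + int (card V)) \<le> int (trunc_conv_sum U V t) + int t * (int t + int (alpha U V))"
    by (metis of_nat_add of_nat_le_iff of_nat_mult)
  moreover have "int (trunc_conv_sum U V t) = (\<Sum>x\<in>sumset U V. int (min (conv_count U V x) t))"
    by (simp add: trunc_conv_sum_def)
  ultimately show ?thesis
    by (simp add: algebra_simps)
qed

end
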